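(* Let $\models$ be an intersective mixed consequence truth-relation on a finite set $V$ of truth values, with induced consequence relation $\vdash$ in a constant expressive setting. The following are equivalent: (i) $\vdash$ admits both a G-disjunction and a G-conjunction; (ii) every minimal representation of $\models$ is based on a disjunction-conjunction-compatible list of sets of designated values; (iii) some representation of $\models$ is based on a disjunction-conjunction-compatible list of sets of designated values.
   Context: $V$ contains distinct $1,0$; sets of designated values: $\mathcal{D}\subseteq V$, $1\in\mathcal{D}$, $0\notin\mathcal{D}$. $\gamma\models_{\mathcal{D}_p,\mathcal{D}_c}\delta$ iff ($\gamma\subseteq\mathcal{D}_p\Rightarrow\delta\cap\mathcal{D}_c\neq\emptyset$). An intersective mixed truth-relation is $\models_{\mathcal{D}_p^1,\mathcal{D}_c^1}\cap\dots\cap\models_{\mathcal{D}_p^K,\mathcal{D}_c^K}$; such a list is a representation, based on the list $\mathcal{D}_p^1,\mathcal{D}_c^1,\dots,\mathcal{D}_p^K,\mathcal{D}_c^K$; minimal if $K$ is least possible. A list $\mathcal{D}_1,\dots,\mathcal{D}_n$ is disjunction-conjunction-compatible if (DC1) for each $\mathcal{D}_i$, either some truth value belongs to $\mathcal{D}_i$ and to no other set of the list, or $\mathcal{D}_i$ is included in another, distinct set of the list; and (DC2) for every non-empty sublist $\mathcal{D}'_1,\dots,\mathcal{D}'_{n'}$ there is $x\in V$ such that for every $i$: $x\in\mathcal{D}_i$ iff $\exists i'$ with $\mathcal{D}'_{i'}\subseteq\mathcal{D}_i$. Semantics: valuations mapping atoms to $V$, connectives interpreted by fixed truth functions, extended compositionally,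 every assignment to finitely many distinct atoms realized; constant expressive: every value is the constant value of some formula. $\Gamma\vdash\Delta$ iff $v(\Gamma)\models v(\Delta)$ for all $v$; $\Gamma,A=\Gamma\cup\{A\}$. G-conjunction: $\Gamma,A\wedge B\vdash\Delta$ iff $\Gamma,A,B\vdash\Delta$; $\Gamma\vdash A\wedge B,\Delta$ iff ($\Gamma\vdash A,\Delta$ and $\Gamma\vdash B,\Delta$). G-disjunction: $\Gamma\vdash A\vee B,\Delta$ iff $\Gamma\vdash A,B,\Delta$; $\Gamma,A\vee B\vdash\Delta$ iff ($\Gamma,A\vdash\Delta$ and $\Gamma,B\vdash\Delta$); all for every $\Gamma,\Delta,A,B$. *)

theory Defs
  imports Main
begin

text \<open>Truth values: a finite type 'v (so V = UNIV is finite).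
  Designated sets: subsets containing one and not containing zero.\<close>

definition designated :: "'v \<Rightarrow> 'v \<Rightarrow> 'v set \<Rightarrow> bool" where
  "designated one zero D \<longleftrightarrow> one \<in> D \<and> zero \<notin> D"

definition mixed_rel :: "'v set \<Rightarrow> 'v set \<Rightarrow> 'v set \<Rightarrow> 'v set \<Rightarrow> bool" where
  "mixed_rel Dp Dc \<gamma> \<delta> \<longleftrightarrow> (\<gamma> \<subseteq> Dp \<longrightarrow> \<delta> \<inter> Dc \<noteq> {})"

definition is_rep :: "'v \<Rightarrow> 'v \<Rightarrow> ('v set \<Rightarrow> 'v set \<Rightarrow> bool) \<Rightarrow> ('v set \<times> 'v set) list \<Rightarrow> bool" where
  "is_rep one zero R Rs \<longleftrightarrow> Rs \<noteq> [] \<and>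
     (\<forall>(Dp, Dc) \<in> set Rs. designated one zero Dp \<and> designated one zero Dc) \<and>
     R = (\<lambda>\<gamma> \<delta>. \<forall>(Dp, Dc) \<in> set Rs. mixed_rel Dp Dc \<gamma> \<delta>)"

definition intersective_mixed :: "'v \<Rightarrow> 'v \<Rightarrow> ('v set \<Rightarrow> 'v set \<Rightarrow> bool) \<Rightarrow> bool" where
  "intersective_mixed one zero R \<longleftrightarrow> (\<exists>Rs. is_rep one zero R Rs)"

definition minimal_rep :: "'v \<Rightarrow> 'v \<Rightarrow> ('v set \<Rightarrow> 'v set \<Rightarrow> bool) \<Rightarrow> ('v set \<times> 'v set) list \<Rightarrow> bool" where
  "minimal_rep one zero R Rs \<longleftrightarrow> is_rep one zero R Rs \<and>
     (\<forall>Rs'. is_rep one zero R Rs' \<longrightarrow> length Rs \<le> length Rs')"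

definition based_list :: "('v set \<times> 'v set) list \<Rightarrow> 'v set list" where
  "based_list Rs = concat (map (\<lambda>(Dp, Dc). [Dp, Dc]) Rs)"

definition DC1 :: "'v set list \<Rightarrow> bool" where
  "DC1 Ds \<longleftrightarrow> (\<forall>i < length Ds.
      (\<exists>x. x \<in> Ds ! i \<and> (\<forall>j < length Ds. Ds ! j \<noteq> Ds ! i \<longrightarrow> x \<notin> Ds ! j))
    \<or> (\<exists>j < length Ds. Ds ! j \<noteq> Ds ! i \<and> Ds ! i \<subseteq> Ds ! j))"

text \<open>A non-empty sublist is given by a non-empty set S of indices.\<close>
definition DC2 :: "'v set list \<Rightarrow> bool" where
  "DC2 Ds \<longleftrightarrow> (\<forall>S. S \<noteq> {} \<longrightarrow> S \<subseteq> {..<length Ds} \<longrightarrow>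
      (\<exists>x. \<forall>i < length Ds. x \<in> Ds ! i \<longleftrightarrow> (\<exists>i' \<in> S. Ds ! i' \<subseteq> Ds ! i)))"

definition dc_compatible :: "'v set list \<Rightarrow> bool" where
  "dc_compatible Ds \<longleftrightarrow> DC1 Ds \<and> DC2 Ds"

datatype 'c form = Atom nat | Op 'c "'c form list"

fun eval :: "('c \<Rightarrow> 'v list \<Rightarrow> 'v) \<Rightarrow> (nat \<Rightarrow> 'v) \<Rightarrow> 'c form \<Rightarrow> 'v" where
  "eval I a (Atom n) = a n"
| "eval I a (Op c As) = I c (map (eval I a) As)"

definition constant_expressive :: "('c \<Rightarrow> 'v list \<Rightarrow> 'v) \<Rightarrow> bool" where
  "constant_expressive I \<longleftrightarrow> (\<forall>x. \<exists>A. \<forall>a. eval I a A = x)"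

definition conseq :: "('c \<Rightarrow> 'v list \<Rightarrow> 'v) \<Rightarrow> ('v set \<Rightarrow> 'v set \<Rightarrow> bool)
    \<Rightarrow> 'c form set \<Rightarrow> 'c form set \<Rightarrow> bool" where
  "conseq I R \<Gamma> \<Delta> \<longleftrightarrow> (\<forall>a. R (eval I a ` \<Gamma>) (eval I a ` \<Delta>))"

definition G_conj :: "('c \<Rightarrow> 'v list \<Rightarrow> 'v) \<Rightarrow> ('v set \<Rightarrow> 'v set \<Rightarrow> bool) \<Rightarrow> 'c \<Rightarrow> bool" where
  "G_conj I R c \<longleftrightarrow> (\<forall>\<Gamma> \<Delta> A B.
     (conseq I R (insert (Op c [A, B]) \<Gamma>) \<Delta> \<longleftrightarrow> conseq I R (insert A (insert B \<Gamma>)) \<Delta>) \<and>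
     (conseq I R \<Gamma> (insert (Op c [A, B]) \<Delta>) \<longleftrightarrow>
        conseq I R \<Gamma> (insert A \<Delta>) \<and> conseq I R \<Gamma> (insert B \<Delta>)))"

definition G_disj :: "('c \<Rightarrow> 'v list \<Rightarrow> 'v) \<Rightarrow> ('v set \<Rightarrow> 'v set \<Rightarrow> bool) \<Rightarrow> 'c \<Rightarrow> bool" where
  "G_disj I R c \<longleftrightarrow> (\<forall>\<Gamma> \<Delta> A B.
     (conseq I R \<Gamma> (insert (Op c [A, B]) \<Delta>) \<longleftrightarrow> conseq I R \<Gamma> (insert A (insert B \<Delta>))) \<and>
     (conseq I R (insert (Op c [A, B]) \<Gamma>) \<Delta> \<longleftrightarrow>
        conseq I R (insert A \<Gamma>) \<Delta> \<and> conseq I R (insert B \<Gamma>) \<Delta>))"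

datatype 'c ext_conn = Base 'c | Cj | Dj

fun ext_interp :: "('c \<Rightarrow> 'v list \<Rightarrow> 'v) \<Rightarrow> ('v \<Rightarrow> 'v \<Rightarrow> 'v) \<Rightarrow> ('v \<Rightarrow> 'v \<Rightarrow> 'v)
    \<Rightarrow> 'c ext_conn \<Rightarrow> 'v list \<Rightarrow> 'v" where
  "ext_interp I fc fd (Base c) xs = I c xs"
| "ext_interp I fc fd Cj xs = fc (xs ! 0) (xs ! 1)"
| "ext_interp I fc fd Dj xs = fd (xs ! 0) (xs ! 1)"

text \<open>The consequence relation admits a G-conjunction and a G-disjunction: there are
  binary truth functions which, as connectives added to the language, obey the G-rules.\<close>
definition admits_G_conj_disj :: "('c \<Rightarrow> 'v list \<Rightarrow> 'v) \<Rightarrow> ('v set \<Rightarrow> 'v set \<Rightarrow> bool) \<Rightarrow> bool" where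
  "admits_G_conj_disj I R \<longleftrightarrow> (\<exists>fc fd.
     G_conj (ext_interp I fc fd) R Cj \<and> G_disj (ext_interp I fc fd) R Dj)"

end

theory Submission
  imports Defs
begin

(*
  For a representation (P_k, C_k), a binary truth function f yields a G-conjunction
  (G-disjunction) as soon as, for every set D of the list, f a b is in D iff a and (or) b are;
  it then respects every mixed relation and hence their intersection. Conversely, in a minimal
  representation no pair (P, C) is dominated by another pair, so for premises extending P and
  conclusions extending the complement of C the relation R behaves like the single relation of
  (P, C); the G-rules tested there force f to commute with membership in P and in C.
  Constant expressiveness makes the G-rules for formulas equivalent to these conditions on values.
  Finally, over a finite V and for sets containing 1 but not 0, such meets and joins of membership
  patterns exist iff the list is DC-compatible: DC2 supplies a value realizing every upward closed
  pattern, while finite meets and joins realize the patterns required by DC2, and DC2 for singleton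
  sublists gives DC1.
*)

definition realizable :: "'v set set \<Rightarrow> ('v set \<Rightarrow> bool) \<Rightarrow> bool" where
  "realizable \<D> Q \<longleftrightarrow> (\<exists>x. \<forall>D\<in>\<D>. x \<in> D \<longleftrightarrow> Q D)"

definition meet_join_closed :: "'v set set \<Rightarrow> bool" where
  "meet_join_closed \<D> \<longleftrightarrow>
     (\<forall>a b. realizable \<D> (\<lambda>D. a \<in> D \<and> b \<in> D) \<and> realizable \<D> (\<lambda>D. a \<in> D \<or> b \<in> D))"

lemma meet_join_closedE:
  assumes "meet_join_closed \<D>"
  obtains meet join
  where "\<And>a b D. D \<in> \<D> \<Longrightarrow> meet a b \<in> D \<longleftrightarrow> a \<in> D \<and> b \<in> D"
    and "\<And>a b D. D \<in> \<D> \<Longrightarrow> join a b \<in> D \<longleftrightarrow> a \<in> D \<or> b \<in> D"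
proof -
  have "\<forall>a b. \<exists>c. \<forall>D\<in>\<D>. c \<in> D \<longleftrightarrow> a \<in> D \<and> b \<in> D"
    and "\<forall>a b. \<exists>c. \<forall>D\<in>\<D>. c \<in> D \<longleftrightarrow> a \<in> D \<or> b \<in> D"
    using assms unfolding meet_join_closed_def realizable_def by blast+
  then show ?thesis using that by metis
qed

lemma realizable_mem: "realizable \<D> (\<lambda>D. x \<in> D)"
  unfolding realizable_def by blast

lemma realizable_conj:
  assumes "meet_join_closed \<D>" "realizable \<D> P" "realizable \<D> Q"
  shows "realizable \<D> (\<lambda>D. P D \<and> Q D)"
proof -
  obtain a b where "\<forall>D\<in>\<D>. a \<in> D \<longleftrightarrow> P D" "\<forall>D\<in>\<D>. b \<in> D \<longleftrightarrow> Q D"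
    using assms(2,3) unfolding realizable_def by blast
  moreover obtain c where "\<forall>D\<in>\<D>. c \<in> D \<longleftrightarrow> a \<in> D \<and> b \<in> D"
    using assms(1) unfolding meet_join_closed_def realizable_def by blast
  ultimately show ?thesis unfolding realizable_def by blast
qed

lemma realizable_disj:
  assumes "meet_join_closed \<D>" "realizable \<D> P" "realizable \<D> Q"
  shows "realizable \<D> (\<lambda>D. P D \<or> Q D)"
proof -
  obtain a b where "\<forall>D\<in>\<D>. a \<in> D \<longleftrightarrow> P D" "\<forall>D\<in>\<D>. b \<in> D \<longleftrightarrow> Q D"
    using assms(2,3) unfolding realizable_def by blast
  moreover obtain c where "\<forall>D\<in>\<D>. c \<in> D \<longleftrightarrow> a \<in> D \<or> b \<in> D"
    using assms(1) unfolding meet_join_closed_def realizable_def by blast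
  ultimately show ?thesis unfolding realizable_def by blast
qed

lemma realizable_Ball:
  assumes "meet_join_closed \<D>" "finite S" "S \<noteq> {}" "\<And>i. i \<in> S \<Longrightarrow> realizable \<D> (Q i)"
  shows "realizable \<D> (\<lambda>D. \<forall>i\<in>S. Q i D)"
  using assms(2-4)
proof (induction S rule: finite_ne_induct)
  case (singleton i)
  then show ?case by simp
next
  case (insert i S)
  then show ?case using realizable_conj[OF assms(1)] by simp
qed

lemma realizable_Bex:
  assumes "meet_join_closed \<D>" "finite S" "S \<noteq> {}" "\<And>i. i \<in> S \<Longrightarrow> realizable \<D> (Q i)"
  shows "realizable \<D> (\<lambda>D. \<exists>i\<in>S. Q i D)"
  using assms(2-4)
proof (induction S rule: finite_ne_induct)
  case (singleton i)
  then show ?case by simp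
next
  case (insert i S)
  then show ?case using realizable_disj[OF assms(1)] by simp
qed

lemma DC2_realizable_mono:
  assumes dc2: "DC2 Ds" and zero: "\<forall>D\<in>set Ds. zero \<notin> D"
    and mono: "\<And>D D'. D \<subseteq> D' \<Longrightarrow> Q D \<Longrightarrow> Q D'"
  shows "realizable (set Ds) Q"
proof (cases "\<exists>D\<in>set Ds. Q D")
  case False
  then show ?thesis using zero unfolding realizable_def by blast
next
  case True
  define S where "S = {i. i < length Ds \<and> Q (Ds ! i)}"
  have "S \<noteq> {}" "S \<subseteq> {..<length Ds}"
    using True by (auto simp: S_def in_set_conv_nth)
  then obtain x where x: "\<forall>i < length Ds. x \<in> Ds ! i \<longleftrightarrow> (\<exists>i'\<in>S. Ds ! i' \<subseteq> Ds ! i)"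
    using dc2 unfolding DC2_def by blast
  have "x \<in> Ds ! i \<longleftrightarrow> Q (Ds ! i)" if "i < length Ds" for i
    using x that mono unfolding S_def by blast
  then show ?thesis unfolding realizable_def by (metis in_set_conv_nth)
qed

lemma DC2_meet_join_closed:
  assumes "DC2 Ds" "\<forall>D\<in>set Ds. zero \<notin> D"
  shows "meet_join_closed (set Ds)"
  unfolding meet_join_closed_def by (intro allI conjI DC2_realizable_mono[OF assms]) auto

lemma meet_join_closed_DC2:
  fixes Ds :: "'v::finite set list"
  assumes closed: "meet_join_closed (set Ds)" and nonempty: "\<forall>D\<in>set Ds. D \<noteq> {}"
  shows "DC2 Ds"
  unfolding DC2_def
proof (intro allI impI)
  fix S assume "S \<noteq> {}" and S: "S \<subseteq> {..<length Ds}"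
  have upset: "realizable (set Ds) (\<lambda>D. Ds ! i \<subseteq> D)" if "i \<in> S" for i
  proof -
    have ne: "Ds ! i \<noteq> {}" using that S nonempty by auto
    have "realizable (set Ds) (\<lambda>D. \<forall>x\<in>Ds ! i. x \<in> D)"
      by (rule realizable_Ball[OF closed finite ne]) (simp add: realizable_mem)
    then show ?thesis by (simp add: subset_eq)
  qed
  have "realizable (set Ds) (\<lambda>D. \<exists>i'\<in>S. Ds ! i' \<subseteq> D)"
    using realizable_Bex[OF closed finite_subset[OF S] \<open>S \<noteq> {}\<close> upset] by simp
  then obtain x where x: "\<forall>D\<in>set Ds. x \<in> D \<longleftrightarrow> (\<exists>i'\<in>S. Ds ! i' \<subseteq> D)"
    unfolding realizable_def by blast
  show "\<exists>x. \<forall>i < length Ds. x \<in> Ds ! i \<longleftrightarrow> (\<exists>i'\<in>S. Ds ! i' \<subseteq> Ds ! i)"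
    using x nth_mem by blast
qed

lemma DC2_DC1:
  assumes "DC2 Ds"
  shows "DC1 Ds"
  unfolding DC1_def
proof (intro allI impI)
  fix i assume i: "i < length Ds"
  then have "{i} \<noteq> {}" "{i} \<subseteq> {..<length Ds}" by auto
  then obtain x where x: "\<forall>j < length Ds. x \<in> Ds ! j \<longleftrightarrow> Ds ! i \<subseteq> Ds ! j"
    using assms unfolding DC2_def by (metis singleton_iff)
  show "(\<exists>x. x \<in> Ds ! i \<and> (\<forall>j < length Ds. Ds ! j \<noteq> Ds ! i \<longrightarrow> x \<notin> Ds ! j))
    \<or> (\<exists>j < length Ds. Ds ! j \<noteq> Ds ! i \<and> Ds ! i \<subseteq> Ds ! j)"
    using x i by blast
qed

lemma dc_compatible_iff_meet_join_closed:
  fixes Ds :: "'v::finite set list"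
  assumes "\<forall>D\<in>set Ds. designated one zero D"
  shows "dc_compatible Ds \<longleftrightarrow> meet_join_closed (set Ds)"
proof -
  have "\<forall>D\<in>set Ds. zero \<notin> D" "\<forall>D\<in>set Ds. D \<noteq> {}"
    using assms unfolding designated_def by auto
  then show ?thesis
    using DC2_meet_join_closed meet_join_closed_DC2 DC2_DC1 unfolding dc_compatible_def by metis
qed

lemma mem_set_based_list:
  "D \<in> set (based_list Rs) \<longleftrightarrow> (\<exists>P C. (P, C) \<in> set Rs \<and> (D = P \<or> D = C))"
  by (auto simp: based_list_def)

lemma is_rep_based_list_designated:
  assumes "is_rep one zero R Rs"
  shows "\<forall>D\<in>set (based_list Rs). designated one zero D"
  using assms by (auto simp: is_rep_def based_list_def)

lemma is_rep_eq:
  assumes "is_rep one zero R Rs"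
  shows "R = (\<lambda>\<gamma> \<delta>. \<forall>(P, C)\<in>set Rs. mixed_rel P C \<gamma> \<delta>)"
  using assms by (simp add: is_rep_def)

lemma minimal_rep_is_rep: "minimal_rep one zero R Rs \<Longrightarrow> is_rep one zero R Rs"
  unfolding minimal_rep_def by blast

lemma minimal_rep_exists:
  assumes "intersective_mixed one zero R"
  obtains Rs where "minimal_rep one zero R Rs"
proof -
  obtain Rs0 where "is_rep one zero R Rs0"
    using assms unfolding intersective_mixed_def by blast
  then show ?thesis
    using ex_has_least_nat[of "is_rep one zero R" Rs0 length] that
    unfolding minimal_rep_def by blast
qed

lemma minimal_rep_undominated:
  assumes m: "minimal_rep one zero R Rs"
    and PC: "(P, C) \<in> set Rs" and PC': "(P', C') \<in> set Rs"
    and "P \<subseteq> P'" "C' \<subseteq> C"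
  shows "(P', C') = (P, C)"
proof (rule ccontr)
  assume ne: "(P', C') \<noteq> (P, C)"
  define Rs' where "Rs' = filter (\<lambda>k. k \<noteq> (P, C)) Rs"
  have rep: "is_rep one zero R Rs" using minimal_rep_is_rep[OF m] .
  have "(P', C') \<in> set Rs'" using PC' ne unfolding Rs'_def by simp
  have "mixed_rel P C \<gamma> \<delta>" if "mixed_rel P' C' \<gamma> \<delta>" for \<gamma> \<delta>
    using that \<open>P \<subseteq> P'\<close> \<open>C' \<subseteq> C\<close> unfolding mixed_rel_def by blast
  then have same: "(\<forall>(Dp, Dc)\<in>set Rs'. mixed_rel Dp Dc \<gamma> \<delta>) \<longleftrightarrow> (\<forall>(Dp, Dc)\<in>set Rs. mixed_rel Dp Dc \<gamma> \<delta>)"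
    for \<gamma> \<delta>
    using \<open>(P', C') \<in> set Rs'\<close> unfolding Rs'_def by fastforce
  have "Rs' \<noteq> []" using \<open>(P', C') \<in> set Rs'\<close> by auto
  moreover have "\<forall>(Dp, Dc)\<in>set Rs'. designated one zero Dp \<and> designated one zero Dc"
    using rep by (auto simp: is_rep_def Rs'_def)
  moreover have "R = (\<lambda>\<gamma> \<delta>. \<forall>(Dp, Dc)\<in>set Rs'. mixed_rel Dp Dc \<gamma> \<delta>)"
    unfolding same by (rule is_rep_eq[OF rep])
  ultimately have "is_rep one zero R Rs'" unfolding is_rep_def by blast
  then have "length Rs \<le> length Rs'" using m unfolding minimal_rep_def by blast
  moreover have "length Rs' < length Rs"
    unfolding Rs'_def using PC by (rule length_filter_less) simp
  ultimately show False by simp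
qed

lemma minimal_rep_extend_premises:
  assumes m: "minimal_rep one zero R Rs" and PC: "(P, C) \<in> set Rs"
  shows "R (X \<union> P) (- C) \<longleftrightarrow> \<not> X \<subseteq> P"
proof -
  have R: "R = (\<lambda>\<gamma> \<delta>. \<forall>(P, C)\<in>set Rs. mixed_rel P C \<gamma> \<delta>)"
    using is_rep_eq[OF minimal_rep_is_rep[OF m]] .
  show ?thesis
  proof
    assume "R (X \<union> P) (- C)"
    then have "mixed_rel P C (X \<union> P) (- C)" using PC R by auto
    then show "\<not> X \<subseteq> P" unfolding mixed_rel_def by auto
  next
    assume "\<not> X \<subseteq> P"
    have "mixed_rel P' C' (X \<union> P) (- C)" if PC': "(P', C') \<in> set Rs" for P' C'
    proof (rule ccontr)
      assume "\<not> mixed_rel P' C' (X \<union> P) (- C)"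
      then have "X \<union> P \<subseteq> P'" "C' \<subseteq> C" unfolding mixed_rel_def by auto
      with minimal_rep_undominated[OF m PC PC'] have "(P', C') = (P, C)" by blast
      with \<open>X \<union> P \<subseteq> P'\<close> \<open>\<not> X \<subseteq> P\<close> show False by simp
    qed
    then show "R (X \<union> P) (- C)" unfolding R by auto
  qed
qed

lemma minimal_rep_extend_conclusions:
  assumes m: "minimal_rep one zero R Rs" and PC: "(P, C) \<in> set Rs"
  shows "R P (X \<union> - C) \<longleftrightarrow> X \<inter> C \<noteq> {}"
proof -
  have R: "R = (\<lambda>\<gamma> \<delta>. \<forall>(P, C)\<in>set Rs. mixed_rel P C \<gamma> \<delta>)"
    using is_rep_eq[OF minimal_rep_is_rep[OF m]] .
  show ?thesis
  proof
    assume "R P (X \<union> - C)"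
    then have "mixed_rel P C P (X \<union> - C)" using PC R by auto
    then show "X \<inter> C \<noteq> {}" unfolding mixed_rel_def by auto
  next
    assume "X \<inter> C \<noteq> {}"
    have "mixed_rel P' C' P (X \<union> - C)" if PC': "(P', C') \<in> set Rs" for P' C'
    proof (rule ccontr)
      assume "\<not> mixed_rel P' C' P (X \<union> - C)"
      then have "P \<subseteq> P'" "(X \<union> - C) \<inter> C' = {}" unfolding mixed_rel_def by auto
      then have "C' \<subseteq> C" by blast
      with minimal_rep_undominated[OF m PC PC'] \<open>P \<subseteq> P'\<close> have "(P', C') = (P, C)" by blast
      with \<open>(X \<union> - C) \<inter> C' = {}\<close> \<open>X \<inter> C \<noteq> {}\<close> show False by auto
    qed
    then show "R P (X \<union> - C)" unfolding R by auto
  qed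
qed

definition G_conj_fun :: "('v set \<Rightarrow> 'v set \<Rightarrow> bool) \<Rightarrow> ('v \<Rightarrow> 'v \<Rightarrow> 'v) \<Rightarrow> bool" where
  "G_conj_fun R f \<longleftrightarrow> (\<forall>\<gamma> \<delta> a b.
     (R (insert (f a b) \<gamma>) \<delta> \<longleftrightarrow> R (insert a (insert b \<gamma>)) \<delta>) \<and>
     (R \<gamma> (insert (f a b) \<delta>) \<longleftrightarrow> R \<gamma> (insert a \<delta>) \<and> R \<gamma> (insert b \<delta>)))"

definition G_disj_fun :: "('v set \<Rightarrow> 'v set \<Rightarrow> bool) \<Rightarrow> ('v \<Rightarrow> 'v \<Rightarrow> 'v) \<Rightarrow> bool" where
  "G_disj_fun R f \<longleftrightarrow> (\<forall>\<gamma> \<delta> a b.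
     (R \<gamma> (insert (f a b) \<delta>) \<longleftrightarrow> R \<gamma> (insert a (insert b \<delta>))) \<and>
     (R (insert (f a b) \<gamma>) \<delta> \<longleftrightarrow> R (insert a \<gamma>) \<delta> \<and> R (insert b \<gamma>) \<delta>))"

lemma G_conj_fun_mixed_rel:
  assumes "\<And>a b. f a b \<in> P \<longleftrightarrow> a \<in> P \<and> b \<in> P" "\<And>a b. f a b \<in> C \<longleftrightarrow> a \<in> C \<and> b \<in> C"
  shows "G_conj_fun (mixed_rel P C) f"
  using assms by (auto simp: G_conj_fun_def mixed_rel_def)

lemma G_disj_fun_mixed_rel:
  assumes "\<And>a b. f a b \<in> P \<longleftrightarrow> a \<in> P \<or> b \<in> P" "\<And>a b. f a b \<in> C \<longleftrightarrow> a \<in> C \<or> b \<in> C"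
  shows "G_disj_fun (mixed_rel P C) f"
  using assms by (auto simp: G_disj_fun_def mixed_rel_def)

lemma G_conj_fun_Ball:
  assumes "\<And>k. k \<in> K \<Longrightarrow> G_conj_fun (Rk k) f"
  shows "G_conj_fun (\<lambda>\<gamma> \<delta>. \<forall>k\<in>K. Rk k \<gamma> \<delta>) f"
  using assms unfolding G_conj_fun_def by blast

lemma G_disj_fun_Ball:
  assumes "\<And>k. k \<in> K \<Longrightarrow> G_disj_fun (Rk k) f"
  shows "G_disj_fun (\<lambda>\<gamma> \<delta>. \<forall>k\<in>K. Rk k \<gamma> \<delta>) f"
  using assms unfolding G_disj_fun_def by blast

lemma is_rep_meet_join_closed_G_funs:
  assumes rep: "is_rep one zero R Rs" and closed: "meet_join_closed (set (based_list Rs))"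
  obtains fc fd where "G_conj_fun R fc" "G_disj_fun R fd"
proof -
  obtain fc fd
    where fc: "\<And>a b D. D \<in> set (based_list Rs) \<Longrightarrow> fc a b \<in> D \<longleftrightarrow> a \<in> D \<and> b \<in> D"
      and fd: "\<And>a b D. D \<in> set (based_list Rs) \<Longrightarrow> fd a b \<in> D \<longleftrightarrow> a \<in> D \<or> b \<in> D"
    using meet_join_closedE[OF closed] by blast
  have R: "R = (\<lambda>\<gamma> \<delta>. \<forall>k\<in>set Rs. mixed_rel (fst k) (snd k) \<gamma> \<delta>)"
    using is_rep_eq[OF rep] by (simp add: case_prod_beta)
  have "G_conj_fun R fc"
    unfolding R by (intro G_conj_fun_Ball G_conj_fun_mixed_rel fc) (force simp: mem_set_based_list)+
  moreover have "G_disj_fun R fd"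
    unfolding R by (intro G_disj_fun_Ball G_disj_fun_mixed_rel fd) (force simp: mem_set_based_list)+
  ultimately show ?thesis using that by blast
qed

lemma minimal_rep_meet_join_closed:
  assumes m: "minimal_rep one zero R Rs" and fc: "G_conj_fun R fc" and fd: "G_disj_fun R fd"
  shows "meet_join_closed (set (based_list Rs))"
proof -
  have "(fc a b \<in> D \<longleftrightarrow> a \<in> D \<and> b \<in> D) \<and> (fd a b \<in> D \<longleftrightarrow> a \<in> D \<or> b \<in> D)"
    if D: "D \<in> set (based_list Rs)" for D a b
  proof -
    obtain P C where PC: "(P, C) \<in> set Rs" and "D = P \<or> D = C"
      using D unfolding mem_set_based_list by blast
    note prem = minimal_rep_extend_premises[OF m PC]
    note concl = minimal_rep_extend_conclusions[OF m PC]
    have "R (insert (fc a b) P) (- C) \<longleftrightarrow> R (insert a (insert b P)) (- C)"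
      and "R P (insert (fc a b) (- C)) \<longleftrightarrow> R P (insert a (- C)) \<and> R P (insert b (- C))"
      using fc unfolding G_conj_fun_def by blast+
    moreover have "R P (insert (fd a b) (- C)) \<longleftrightarrow> R P (insert a (insert b (- C)))"
      and "R (insert (fd a b) P) (- C) \<longleftrightarrow> R (insert a P) (- C) \<and> R (insert b P) (- C)"
      using fd unfolding G_disj_fun_def by blast+
    moreover have "R (insert x P) (- C) \<longleftrightarrow> x \<notin> P"
      and "R (insert x (insert y P)) (- C) \<longleftrightarrow> \<not> (x \<in> P \<and> y \<in> P)"
      and "R P (insert x (- C)) \<longleftrightarrow> x \<in> C"
      and "R P (insert x (insert y (- C))) \<longleftrightarrow> x \<in> C \<or> y \<in> C" for x y
      using prem[of "{x}"] prem[of "{x, y}"] concl[of "{x}"] concl[of "{x, y}"] by simp_all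
    ultimately show ?thesis using \<open>D = P \<or> D = C\<close> by auto
  qed
  then show ?thesis unfolding meet_join_closed_def realizable_def by blast
qed

lemma eval_map_Base: "eval (ext_interp I fc fd) v (map_form Base A) = eval I v A"
  by (induction A) (simp_all cong: map_cong)

text \<open>Meaningful only for constant-expressive I; otherwise SOME picks an arbitrary formula.\<close>

definition const_form :: "('c \<Rightarrow> 'v list \<Rightarrow> 'v) \<Rightarrow> 'v \<Rightarrow> 'c ext_conn form" where
  "const_form I x = map_form Base (SOME A. \<forall>v. eval I v A = x)"

lemma eval_const_form:
  assumes "constant_expressive I"
  shows "eval (ext_interp I fc fd) v (const_form I x) = x"
proof -
  have "\<exists>A. \<forall>v. eval I v A = x" using assms unfolding constant_expressive_def by blast
  then have "\<forall>v. eval I v (SOME A. \<forall>v. eval I v A = x) = x" by (rule someI_ex)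
  then show ?thesis unfolding const_form_def eval_map_Base by simp
qed

lemma G_conj_ext_interp_iff:
  assumes "constant_expressive I"
  shows "G_conj (ext_interp I fc fd) R Cj \<longleftrightarrow> G_conj_fun R fc"
proof
  assume G: "G_conj (ext_interp I fc fd) R Cj"
  show "G_conj_fun R fc"
    unfolding G_conj_fun_def
  proof (intro allI)
    fix \<gamma> \<delta> a b
    let ?c = "const_form I"
    show "(R (insert (fc a b) \<gamma>) \<delta> \<longleftrightarrow> R (insert a (insert b \<gamma>)) \<delta>) \<and>
      (R \<gamma> (insert (fc a b) \<delta>) \<longleftrightarrow> R \<gamma> (insert a \<delta>) \<and> R \<gamma> (insert b \<delta>))"
      using G[unfolded G_conj_def, rule_format,
        where \<Gamma> = "?c ` \<gamma>" and \<Delta> = "?c ` \<delta>" and A = "?c a" and B = "?c b"]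
      by (simp add: conseq_def image_image eval_const_form[OF assms])
  qed
next
  assume "G_conj_fun R fc"
  then show "G_conj (ext_interp I fc fd) R Cj"
    unfolding G_conj_def G_conj_fun_def conseq_def by (simp add: all_conj_distrib)
qed

lemma G_disj_ext_interp_iff:
  assumes "constant_expressive I"
  shows "G_disj (ext_interp I fc fd) R Dj \<longleftrightarrow> G_disj_fun R fd"
proof
  assume G: "G_disj (ext_interp I fc fd) R Dj"
  show "G_disj_fun R fd"
    unfolding G_disj_fun_def
  proof (intro allI)
    fix \<gamma> \<delta> a b
    let ?c = "const_form I"
    show "(R \<gamma> (insert (fd a b) \<delta>) \<longleftrightarrow> R \<gamma> (insert a (insert b \<delta>))) \<and>
      (R (insert (fd a b) \<gamma>) \<delta> \<longleftrightarrow> R (insert a \<gamma>) \<delta> \<and> R (insert b \<gamma>) \<delta>)"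
      using G[unfolded G_disj_def, rule_format,
        where \<Gamma> = "?c ` \<gamma>" and \<Delta> = "?c ` \<delta>" and A = "?c a" and B = "?c b"]
      by (simp add: conseq_def image_image eval_const_form[OF assms])
  qed
next
  assume "G_disj_fun R fd"
  then show "G_disj (ext_interp I fc fd) R Dj"
    unfolding G_disj_def G_disj_fun_def conseq_def by (simp add: all_conj_distrib)
qed

lemma admits_G_conj_disj_iff:
  assumes "constant_expressive I"
  shows "admits_G_conj_disj I R \<longleftrightarrow> (\<exists>fc fd. G_conj_fun R fc \<and> G_disj_fun R fd)"
  unfolding admits_G_conj_disj_def G_conj_ext_interp_iff[OF assms] G_disj_ext_interp_iff[OF assms] ..

theorem theorem7p6:
  fixes one zero :: "'v::finite"
    and R :: "'v set \<Rightarrow> 'v set \<Rightarrow> bool"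
    and I :: "'c \<Rightarrow> 'v list \<Rightarrow> 'v"
  assumes "one \<noteq> zero"
    and "intersective_mixed one zero R"
    and "constant_expressive I"
  shows "(admits_G_conj_disj I R \<longleftrightarrow>
           (\<forall>Rs. minimal_rep one zero R Rs \<longrightarrow> dc_compatible (based_list Rs)))
       \<and> ((\<forall>Rs. minimal_rep one zero R Rs \<longrightarrow> dc_compatible (based_list Rs)) \<longleftrightarrow>
           (\<exists>Rs. is_rep one zero R Rs \<and> dc_compatible (based_list Rs)))"
proof -
  have dc_iff: "dc_compatible (based_list Rs) \<longleftrightarrow> meet_join_closed (set (based_list Rs))"
    if "is_rep one zero R Rs" for Rs
    using dc_compatible_iff_meet_join_closed is_rep_based_list_designated[OF that] by blast
  obtain Rm where Rm: "minimal_rep one zero R Rm"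
    using minimal_rep_exists[OF assms(2)] .
  have i_ii: "dc_compatible (based_list Rs)"
    if adm: "admits_G_conj_disj I R" and m: "minimal_rep one zero R Rs" for Rs
  proof -
    obtain fc fd where "G_conj_fun R fc" "G_disj_fun R fd"
      using adm unfolding admits_G_conj_disj_iff[OF assms(3)] by blast
    then show ?thesis
      using minimal_rep_meet_join_closed[OF m] dc_iff[OF minimal_rep_is_rep[OF m]] by blast
  qed
  have iii_i: "admits_G_conj_disj I R"
    if "is_rep one zero R Rs" "dc_compatible (based_list Rs)" for Rs
    using that is_rep_meet_join_closed_G_funs dc_iff
    unfolding admits_G_conj_disj_iff[OF assms(3)] by metis
  have ii_iii: "\<exists>Rs. is_rep one zero R Rs \<and> dc_compatible (based_list Rs)"
    if "\<forall>Rs. minimal_rep one zero R Rs \<longrightarrow> dc_compatible (based_list Rs)"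
    using that Rm minimal_rep_is_rep[OF Rm] by blast
  show ?thesis
    using i_ii ii_iii iii_i by blast
qed

end
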